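(* For $n\ge 0$ let $U_n \equiv \mathbf{B}Y_0\mathbf{S}\cdots\mathbf{S}\mathbf{I}$ with exactly $n$ copies of $\mathbf{S}$ (the Scott sequence). Then $U_n \neq_\beta U_m$ for all $n\neq m$.
   Context: Untyped $\lambda$-calculus modulo $\alpha$; application associates to the left. $\mathbf{I}\equiv\lambda x.x$, $\mathbf{S}\equiv\lambda xyz.\,xz(yz)$, $\mathbf{B}\equiv\lambda xyz.\,x(yz)$, and $Y_0\equiv\lambda f.\,\omega_f\omega_f$ with $\omega_f\equiv\lambda x.\,f(xx)$ (Curry's fixed point combinator). *)

theory Defs
  imports Main
begin

datatype dB = Var nat | App dB dB | Abs dB

primrec lift :: "dB \<Rightarrow> nat \<Rightarrow> dB" where
  "lift (Var i) k = (if i < k then Var i else Var (Suc i))"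
| "lift (App s t) k = App (lift s k) (lift t k)"
| "lift (Abs s) k = Abs (lift s (Suc k))"

primrec subst :: "dB \<Rightarrow> dB \<Rightarrow> nat \<Rightarrow> dB" where
  "subst (Var i) s k = (if k < i then Var (i - 1) else if i = k then s else Var i)"
| "subst (App t u) s k = App (subst t s k) (subst u s k)"
| "subst (Abs t) s k = Abs (subst t (lift s 0) (Suc k))"

inductive beta :: "dB \<Rightarrow> dB \<Rightarrow> bool" where
  beta_rule: "beta (App (Abs s) t) (subst s t 0)"
| appL: "beta s t \<Longrightarrow> beta (App s u) (App t u)"
| appR: "beta s t \<Longrightarrow> beta (App u s) (App u t)"
| abs: "beta s t \<Longrightarrow> beta (Abs s) (Abs t)"

definition beta_eq :: "dB \<Rightarrow> dB \<Rightarrow> bool" where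
  "beta_eq = equivclp beta"

definition combI :: dB where "combI = Abs (Var 0)"
definition combS :: dB where
  "combS = Abs (Abs (Abs (App (App (Var 2) (Var 0)) (App (Var 1) (Var 0)))))"
definition combB :: dB where
  "combB = Abs (Abs (Abs (App (Var 2) (App (Var 1) (Var 0)))))"
text \<open>Curry's fixed point combinator Y0 = \<lambda>f. (\<lambda>x. f(xx)) (\<lambda>x. f(xx)).\<close>
definition combY0 :: dB where
  "combY0 = Abs (App (Abs (App (Var 1) (App (Var 0) (Var 0))))
                     (Abs (App (Var 1) (App (Var 0) (Var 0)))))"

primrec scott_pre :: "nat \<Rightarrow> dB" where
  "scott_pre 0 = App combB combY0"
| "scott_pre (Suc n) = App (scott_pre n) combS"

definition scottU :: "nat \<Rightarrow> dB" where
  "scottU n = App (scott_pre n) combI"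

end

theory Submission
  imports Defs "HOL-Library.Confluence"
begin

text \<open>
  Apply \<open>U\<^sub>n\<close> to a variable \<open>x\<close>. Since \<open>\<^bold>B Y\<^sub>0 f g = Y\<^sub>0 (f g)\<close> and
  \<open>Y\<^sub>0 F\<close> reduces to \<open>W W\<close> with \<open>W = \<lambda>y. F (y y)\<close>, the term \<open>U\<^sub>n x\<close> weak-head reduces
  to a \<^emph>\<open>knot\<close> \<open>W W a\<^sub>1 \<dots> a\<^sub>n\<close>, where \<open>F\<close> is \<open>\<^bold>I x\<close>, \<open>\<^bold>S \<^bold>I\<close> or \<open>\<^bold>S \<^bold>S\<close> and the
  \<open>n\<close> arguments are none, \<open>x\<close> or \<open>\<^bold>S \<dots> \<^bold>S \<^bold>I x\<close>. A knot weak-head reduces to \<open>x K\<close> with \<open>K\<close> again a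
  knot with \<open>n\<close> arguments, and this survives reduction: the arguments are normal and every
  reduct of \<open>W\<close> unfolds in the same way, so every parallel reduct of a knot weak-head reduces
  to \<open>x K'\<close> with \<open>K'\<close> a knot with \<open>n\<close> arguments. Hence each reduct of \<open>U\<^sub>n x\<close> reduces
  further to a tower \<open>x (x (\<dots> (x K)))\<close> over such a knot. As weak head reduction is
  deterministic, the number of arguments of the knot at the top of a tower is determined by the
  tower, so by Church--Rosser a common reduct of \<open>U\<^sub>n\<close> and \<open>U\<^sub>m\<close> forces \<open>n = m\<close>.
\<close>

section \<open>Church--Rosser via parallel reduction\<close>

lemma lift_lift:
  "i \<le> k \<Longrightarrow> lift (lift t i) (Suc k) = lift (lift t k) i"
  by (induct t arbitrary: i k) auto

lemma lift_subst [simp]: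
  "j \<le> i \<Longrightarrow> lift (subst t s j) i = subst (lift t (Suc i)) (lift s i) j"
  by (induct t arbitrary: i j s) (simp_all add: diff_Suc lift_lift split: nat.split)

lemma lift_subst_lt:
  "i \<le> j \<Longrightarrow> lift (subst t s j) i = subst (lift t i) (lift s i) (Suc j)"
  by (induct t arbitrary: i j s) (auto simp: lift_lift)

lemma subst_lift [simp]: "subst (lift t k) s k = t"
  by (induct t arbitrary: k s) simp_all

lemma subst_subst:
  "i \<le> j \<Longrightarrow> subst (subst t (lift v i) (Suc j)) (subst u v j) i = subst (subst t u i) v j"
  by (induct t arbitrary: i j u v)
    (simp_all add: diff_Suc lift_lift [symmetric] lift_subst_lt split: nat.split)

inductive par_beta :: "dB \<Rightarrow> dB \<Rightarrow> bool"  (infixl "\<Rightarrow>\<^sub>p" 50) where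
  var [simp, intro!]: "Var n \<Rightarrow>\<^sub>p Var n"
| abs [simp, intro!]: "s \<Rightarrow>\<^sub>p t \<Longrightarrow> Abs s \<Rightarrow>\<^sub>p Abs t"
| app [simp, intro!]: "s \<Rightarrow>\<^sub>p s' \<Longrightarrow> t \<Rightarrow>\<^sub>p t' \<Longrightarrow> App s t \<Rightarrow>\<^sub>p App s' t'"
| beta [simp, intro!]: "s \<Rightarrow>\<^sub>p s' \<Longrightarrow> t \<Rightarrow>\<^sub>p t' \<Longrightarrow> App (Abs s) t \<Rightarrow>\<^sub>p subst s' t' 0"

inductive_cases par_beta_cases [elim!]:
  "Var n \<Rightarrow>\<^sub>p t"
  "Abs s \<Rightarrow>\<^sub>p t"
  "App s t \<Rightarrow>\<^sub>p u"

lemma par_beta_refl [simp]: "t \<Rightarrow>\<^sub>p t"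
  by (induct t) simp_all

lemma beta_imp_par_beta: "beta s t \<Longrightarrow> s \<Rightarrow>\<^sub>p t"
  by (induct rule: beta.induct) auto

lemma rtranclp_beta_App:
  assumes "beta\<^sup>*\<^sup>* s s'" and "beta\<^sup>*\<^sup>* t t'"
  shows "beta\<^sup>*\<^sup>* (App s t) (App s' t')"
proof -
  from assms(1) have "beta\<^sup>*\<^sup>* (App s t) (App s' t)"
    by induct (auto intro: rtranclp.rtrancl_into_rtrancl beta.appL)
  also from assms(2) have "beta\<^sup>*\<^sup>* (App s' t) (App s' t')"
    by induct (auto intro: rtranclp.rtrancl_into_rtrancl beta.appR)
  finally show ?thesis .
qed

lemma rtranclp_beta_Abs: "beta\<^sup>*\<^sup>* s s' \<Longrightarrow> beta\<^sup>*\<^sup>* (Abs s) (Abs s')"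
  by (induct rule: rtranclp.induct) (auto intro: rtranclp.rtrancl_into_rtrancl beta.abs)

lemma par_beta_imp_rtranclp_beta: "s \<Rightarrow>\<^sub>p t \<Longrightarrow> beta\<^sup>*\<^sup>* s t"
proof (induct rule: par_beta.induct)
  case (beta s s' t t')
  then have "beta\<^sup>*\<^sup>* (App (Abs s) t) (App (Abs s') t')"
    by (simp add: rtranclp_beta_App rtranclp_beta_Abs)
  then show ?case by (auto intro: rtranclp.rtrancl_into_rtrancl beta.beta_rule)
qed (auto intro: rtranclp_beta_App rtranclp_beta_Abs)

lemma rtranclp_par_beta_eq: "par_beta\<^sup>*\<^sup>* = beta\<^sup>*\<^sup>*"
proof (intro ext iffI)
  show "par_beta\<^sup>*\<^sup>* s t \<Longrightarrow> beta\<^sup>*\<^sup>* s t" for s t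
    by (induct rule: rtranclp_induct) (auto dest: par_beta_imp_rtranclp_beta)
  show "beta\<^sup>*\<^sup>* s t \<Longrightarrow> par_beta\<^sup>*\<^sup>* s t" for s t
    by (induct rule: rtranclp_induct) (auto intro: rtranclp.rtrancl_into_rtrancl beta_imp_par_beta)
qed

lemma par_beta_lift [simp]: "t \<Rightarrow>\<^sub>p t' \<Longrightarrow> lift t n \<Rightarrow>\<^sub>p lift t' n"
  by (induct t arbitrary: t' n) fastforce+

lemma par_beta_subst: "s \<Rightarrow>\<^sub>p s' \<Longrightarrow> t \<Rightarrow>\<^sub>p t' \<Longrightarrow> subst t s n \<Rightarrow>\<^sub>p subst t' s' n"
  by (induct t arbitrary: s s' t' n) (fastforce simp: subst_subst [symmetric])+

lemma par_beta_diamond: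
  "s \<Rightarrow>\<^sub>p t1 \<Longrightarrow> s \<Rightarrow>\<^sub>p t2 \<Longrightarrow> \<exists>u. t1 \<Rightarrow>\<^sub>p u \<and> t2 \<Rightarrow>\<^sub>p u"
  by (induct arbitrary: t2 rule: par_beta.induct) (blast intro!: par_beta_subst)+

lemma confluentp_beta: "confluentp beta"
proof (rule confluentpI)
  have "confluentp par_beta"
    by (rule strong_confluentp_imp_confluentp, rule strong_confluentpI)
      (blast dest: par_beta_diamond)
  then show "\<exists>u. beta\<^sup>*\<^sup>* t1 u \<and> beta\<^sup>*\<^sup>* t2 u" if "beta\<^sup>*\<^sup>* s t1" "beta\<^sup>*\<^sup>* s t2" for s t1 t2
    using that unfolding rtranclp_par_beta_eq [symmetric] by (rule confluentpD)
qed

lemma beta_eq_iff_common_reduct: "beta_eq s t \<longleftrightarrow> (\<exists>u. beta\<^sup>*\<^sup>* s u \<and> beta\<^sup>*\<^sup>* t u)"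
  using semiconfluentp_equivclp [OF confluentp_imp_semiconfluentp [OF confluentp_beta]]
  by (auto simp: beta_eq_def rtranclp_conversep)

section \<open>Weak head reduction\<close>

primrec apps :: "dB \<Rightarrow> dB list \<Rightarrow> dB" where
  "apps t [] = t"
| "apps t (u # us) = apps (App t u) us"

lemma apps_App [simp]: "apps (App t u) us = apps t (u # us)"
  by simp

declare apps.simps(2) [simp del]

lemma apps_singleton [simp]: "apps t [u] = App t u"
  by (simp add: apps.simps(2))

lemma apps_append: "apps t (us @ vs) = apps (apps t us) vs"
  by (induct us arbitrary: t) (simp_all add: apps.simps(2) del: apps_App)

lemma apps_snoc: "apps t (us @ [u]) = App (apps t us) u"
  by (simp add: apps_append)

lemma apps_Abs_eq_apps_Abs_iff: "apps (Abs a) us = apps (Abs b) vs \<longleftrightarrow> a = b \<and> us = vs"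
proof (induct us arbitrary: vs rule: rev_induct)
  case Nil
  then show ?case by (cases vs rule: rev_cases) (auto simp: apps_snoc)
next
  case (snoc u us)
  then show ?case by (cases vs rule: rev_cases) (auto simp: apps_snoc simp del: apps_App)
qed

inductive wh :: "dB \<Rightarrow> dB \<Rightarrow> bool" where
  beta: "wh (App (Abs s) t) (subst s t 0)"
| appL: "wh s s' \<Longrightarrow> wh (App s u) (App s' u)"

abbreviation whs :: "dB \<Rightarrow> dB \<Rightarrow> bool" where
  "whs \<equiv> wh\<^sup>*\<^sup>*"

inductive_cases wh_AbsE [elim!]: "wh (Abs s) u"
inductive_cases wh_VarE [elim!]: "wh (Var i) u"
inductive_cases wh_AppE: "wh (App s t) u"

lemma wh_imp_beta: "wh s t \<Longrightarrow> beta s t"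
  by (induct rule: wh.induct) (auto intro: beta.intros)

lemma whs_imp_rtranclp_beta: "whs s t \<Longrightarrow> beta\<^sup>*\<^sup>* s t"
  by (induct rule: rtranclp_induct) (auto intro: rtranclp.rtrancl_into_rtrancl wh_imp_beta)

lemma wh_apps: "wh s s' \<Longrightarrow> wh (apps s us) (apps s' us)"
  by (induct us arbitrary: s s') (auto intro: wh.appL simp: apps.simps(2) simp del: apps_App)

lemma whs_apps: "whs s s' \<Longrightarrow> whs (apps s us) (apps s' us)"
  by (induct rule: rtranclp_induct) (auto intro: rtranclp.rtrancl_into_rtrancl wh_apps)

lemma whs_beta_apps:
  "whs (apps (subst s t 0) us) r \<Longrightarrow> whs (apps (Abs s) (t # us)) r"
  using wh_apps [OF wh.beta, of s t us] by (auto intro: converse_rtranclp_into_rtranclp)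

lemma wh_not_Abs: "wh s s' \<Longrightarrow> s \<noteq> Abs b"
  by (induct rule: wh.induct) auto

lemma wh_deterministic: "wh s t1 \<Longrightarrow> wh s t2 \<Longrightarrow> t1 = t2"
proof (induct arbitrary: t2 rule: wh.induct)
  case (beta s t)
  from beta show ?case by (cases rule: wh_AppE) auto
next
  case (appL s s' u)
  from appL.prems have "\<exists>s''. t2 = App s'' u \<and> wh s s''"
    by (cases rule: wh_AppE) (use wh_not_Abs [OF appL.hyps(1)] in auto)
  with appL.hyps(2) show ?case by blast
qed

lemma not_wh_Var_App: "\<not> wh (App (Var i) t) u"
  by (auto elim: wh_AppE)

lemma whs_Var_App_unique:
  "whs s (App (Var i) t1) \<Longrightarrow> whs s (App (Var i) t2) \<Longrightarrow> t1 = t2"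
proof (induct arbitrary: t2 rule: converse_rtranclp_induct)
  case base
  then show ?case by (auto elim: converse_rtranclpE simp: not_wh_Var_App)
next
  case (step s s')
  from step.prems show ?case
  proof (cases rule: converse_rtranclpE)
    case base
    with step.hyps(1) show ?thesis by (simp add: not_wh_Var_App)
  next
    case (step s'')
    with wh_deterministic [OF step.hyps(1)] step.hyps(3) show ?thesis by simp
  qed
qed

lemma whs_App: "whs s s' \<Longrightarrow> whs (App s u) (App s' u)"
  using whs_apps [of s s' "[u]"] by simp

lemma wh_par_beta_commute:
  "wh s s' \<Longrightarrow> s \<Rightarrow>\<^sub>p t \<Longrightarrow> \<exists>t'. whs t t' \<and> s' \<Rightarrow>\<^sub>p t'"
proof (induct arbitrary: t rule: wh.induct)
  case (beta s u)
  from beta.prems obtain s' u' where "s \<Rightarrow>\<^sub>p s'" "u \<Rightarrow>\<^sub>p u'"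
    and "t = App (Abs s') u' \<or> t = subst s' u' 0"
    by blast
  then show ?case by (blast intro: par_beta_subst wh.beta)
next
  case (appL s s' u)
  from appL.prems wh_not_Abs [OF appL.hyps(1)]
  obtain s0 u' where "s \<Rightarrow>\<^sub>p s0" "u \<Rightarrow>\<^sub>p u'" "t = App s0 u'"
    by blast
  with appL.hyps(2) show ?case by (blast intro: whs_App)
qed

lemma whs_Var_App_par_beta:
  "whs s (App (Var i) s1) \<Longrightarrow> s \<Rightarrow>\<^sub>p t \<Longrightarrow> \<exists>t1. whs t (App (Var i) t1) \<and> s1 \<Rightarrow>\<^sub>p t1"
proof (induct arbitrary: t rule: converse_rtranclp_induct)
  case base
  then show ?case by auto
next
  case (step s s')
  from wh_par_beta_commute [OF step.hyps(1) step.prems] obtain t' where "whs t t'" "s' \<Rightarrow>\<^sub>p t'"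
    by blast
  with step.hyps(3) show ?case by (meson rtranclp_trans)
qed

lemma par_beta_apps_inv:
  assumes "apps h us \<Rightarrow>\<^sub>p t" and "\<And>b. h \<noteq> Abs b"
  shows "\<exists>h' us'. t = apps h' us' \<and> h \<Rightarrow>\<^sub>p h' \<and> list_all2 par_beta us us'"
  using assms
proof (induct us arbitrary: h)
  case Nil
  then show ?case by auto
next
  case (Cons u us)
  from Cons.prems(1) obtain h'' us'' where t: "t = apps h'' us''" and h'': "App h u \<Rightarrow>\<^sub>p h''"
    and us'': "list_all2 par_beta us us''"
    using Cons.hyps [of "App h u"] by (auto simp: apps.simps(2) simp del: apps_App)
  from h'' Cons.prems(2) obtain h' u' where "h'' = App h' u'" "h \<Rightarrow>\<^sub>p h'" "u \<Rightarrow>\<^sub>p u'"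
    by blast
  with t us'' show ?case
    by (intro exI [of _ h'] exI [of _ "u' # us''"]) (simp add: apps.simps(2) del: apps_App)
qed

section \<open>Knots\<close>

lemma lift_lift_0: "lift (lift t 0) 0 = lift (lift t 0) 1"
  using lift_lift [of 0 0 t] by simp

lemma lift_combS [simp]: "lift combS k = combS"
  by (simp add: combS_def)

lemma subst_combS [simp]: "subst combS s k = combS"
  by (simp add: combS_def)

lemma lift_combI [simp]: "lift combI k = combI"
  by (simp add: combI_def)

lemma subst_combI [simp]: "subst combI s k = combI"
  by (simp add: combI_def)

lemma whs_combS: "whs (apps combS (a # b # c # us)) (apps a (c # App b c # us))"
  unfolding combS_def by (rule whs_beta_apps, simp)+ (simp add: lift_lift_0)

lemma whs_combI: "whs (apps combI (a # us)) (apps a us)"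
  unfolding combI_def by (rule whs_beta_apps) simp

lemma whs_combB: "whs (apps combB (a # b # c # us)) (apps a (App b c # us))"
  unfolding combB_def by (rule whs_beta_apps, simp)+ (simp add: lift_lift_0)

text \<open>
  \<open>knot_body n\<close> consists of all reducts of the body \<open>F (y y)\<close> of \<open>W\<close>, with \<open>y = Var 0\<close> and
  the free variable \<open>x = Var 1\<close>; \<open>knot_args n\<close> are the arguments following \<open>W W\<close>, with
  \<open>x = Var 0\<close>.
\<close>

fun knot_body :: "nat \<Rightarrow> dB set" where
  "knot_body 0 =
    {App (Var 1) (App (Var 0) (Var 0)),
     App (App combI (Var 1)) (App (Var 0) (Var 0))}"
| "knot_body (Suc 0) =
    {App (App combS combI) (App (Var 0) (Var 0)),
     App (Abs (Abs (App (App combI (Var 0)) (App (Var 1) (Var 0))))) (App (Var 0) (Var 0)),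
     App (Abs (Abs (App (Var 0) (App (Var 1) (Var 0))))) (App (Var 0) (Var 0)),
     Abs (App (App combI (Var 0)) (App (App (Var 1) (Var 1)) (Var 0))),
     Abs (App (Var 0) (App (App (Var 1) (Var 1)) (Var 0)))}"
| "knot_body (Suc (Suc k)) =
    {App (App combS combS) (App (Var 0) (Var 0)),
     App (Abs (Abs (App (App combS (Var 0)) (App (Var 1) (Var 0))))) (App (Var 0) (Var 0)),
     App (Abs (Abs (App (Abs (Abs (App (App (Var 2) (Var 0)) (App (Var 1) (Var 0)))))
       (App (Var 1) (Var 0))))) (App (Var 0) (Var 0)),
     App (Abs (Abs (Abs (App (App (Var 1) (Var 0)) (App (App (Var 2) (Var 1)) (Var 0))))))
       (App (Var 0) (Var 0)),
     Abs (App (App combS (Var 0)) (App (App (Var 1) (Var 1)) (Var 0))),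
     Abs (App (Abs (Abs (App (App (Var 2) (Var 0)) (App (Var 1) (Var 0)))))
       (App (App (Var 1) (Var 1)) (Var 0))),
     Abs (Abs (App (App (Var 1) (Var 0)) (App (App (App (Var 2) (Var 2)) (Var 1)) (Var 0))))}"

fun knot_args :: "nat \<Rightarrow> dB list" where
  "knot_args 0 = []"
| "knot_args (Suc 0) = [Var 0]"
| "knot_args (Suc (Suc k)) = replicate k combS @ [combI, Var 0]"

definition knot :: "nat \<Rightarrow> dB set" where
  "knot n = {apps (Abs a) (Abs b # knot_args n) | a b. a \<in> knot_body n \<and> b \<in> knot_body n}"

lemma length_knot_args [simp]: "length (knot_args n) = n"
  by (induct n rule: knot_args.induct) simp_all

lemma par_beta_knot_body: "a \<in> knot_body n \<Longrightarrow> a \<Rightarrow>\<^sub>p a' \<Longrightarrow> a' \<in> knot_body n"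
  by (induct n rule: knot_body.induct) (auto simp: combI_def combS_def)

lemma closed_Abs_knot_body:
  assumes "b \<in> knot_body (Suc n)"
  shows "lift (Abs b) k = Abs b" and "subst (Abs b) s k = Abs b"
  using assms by (cases n; auto)+

lemma whs_subst_knot_body_1:
  assumes "a \<in> knot_body 1" and "\<And>k. lift W k = W" and "\<And>s k. subst W s k = W"
  shows "whs (apps (subst a W 0) (t1 # us)) (apps t1 (App (App W W) t1 # us))"
  using assms
  by (auto simp: lift_lift_0 intro!: whs_beta_apps rtranclp_trans [OF whs_combS]
      rtranclp_trans [OF whs_combI])

lemma whs_subst_knot_body_2:
  assumes "a \<in> knot_body 2" and "\<And>k. lift W k = W" and "\<And>s k. subst W s k = W"
  shows "whs (apps (subst a W 0) (t1 # t2 # us)) (apps t1 (t2 # App (App (App W W) t1) t2 # us))"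
  using assms
  by (auto simp: lift_lift_0 numeral_2_eq_2 intro!: whs_beta_apps rtranclp_trans [OF whs_combS]
      rtranclp_trans [OF whs_combI])

lemma whs_combS_combS_tail:
  "whs (apps combS (combS # M # replicate i combS @ [combI, Var 0]))
       (App (Var 0) (apps M (replicate i combS @ [combI, Var 0])))"
proof (induct i arbitrary: M)
  case 0
  show ?case
    using whs_combS [of combS M combI "[Var 0]"] whs_combS [of combI "App M combI" "Var 0" "[]"]
      whs_combI [of "Var 0" "[App (App M combI) (Var 0)]"]
    by (simp add: apps.simps(2) del: apps_App)
next
  case (Suc i)
  from Suc [of "App M combS"] show ?case
    by (auto intro: rtranclp_trans [OF whs_combS])
qed

lemma whs_knot_unfold:
  assumes "a \<in> knot_body n" and "b \<in> knot_body n"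
  shows "whs (apps (subst a (Abs b) 0) (knot_args n))
             (App (Var 0) (apps (Abs b) (Abs b # knot_args n)))"
proof (cases n rule: knot_args.cases)
  case 1
  with assms show ?thesis
    using whs_App [OF whs_combI [of "Var 0" "[]", simplified]] by auto
next
  case 2
  with assms show ?thesis
    using whs_subst_knot_body_1 [of a "Abs b" "Var 0" "[]"] closed_Abs_knot_body [of b 0]
    by (simp add: apps.simps(2) del: apps_App)
next
  case (3 k)
  let ?W = "Abs b"
  have W: "lift ?W k = ?W" "subst ?W s k = ?W" for k s
    using assms closed_Abs_knot_body [of b "Suc k"] 3 by auto
  have a: "a \<in> knot_body 2"
    using assms 3 by (simp add: numeral_2_eq_2)
  show ?thesis
  proof (cases k rule: knot_args.cases)
    case 1
    with 3 show ?thesis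
      using whs_subst_knot_body_2 [OF a W, of combI "Var 0" "[]"]
        whs_combI [of "Var 0" "[App (App (App ?W ?W) combI) (Var 0)]"]
      by (simp add: apps.simps(2) del: apps_App)
  next
    case 2
    with 3 show ?thesis
      using whs_subst_knot_body_2 [OF a W, of combS combI "[Var 0]"]
        whs_combS [of combI "App (App (App ?W ?W) combS) combI" "Var 0" "[]"]
        whs_combI [of "Var 0" "[App (App (App (App ?W ?W) combS) combI) (Var 0)]"]
      by (simp add: apps.simps(2) del: apps_App)
  next
    case (3 j)
    with \<open>n = Suc (Suc k)\<close> show ?thesis
      using whs_subst_knot_body_2 [OF a W, of combS combS "replicate j combS @ [combI, Var 0]"]
        whs_combS_combS_tail [of "App (App (App ?W ?W) combS) combS" j]
      by (auto intro: rtranclp_trans)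
  qed
qed

lemma par_beta_knot_arg: "t \<in> set (knot_args n) \<Longrightarrow> t \<Rightarrow>\<^sub>p t' \<Longrightarrow> t' = t"
  by (induct n rule: knot_args.induct) (auto simp: combS_def combI_def)

lemma list_all2_par_beta_knot_args: "list_all2 par_beta (knot_args n) us \<Longrightarrow> us = knot_args n"
  by (metis list_all2_conv_all_nth nth_equalityI nth_mem par_beta_knot_arg)

lemma par_beta_knot:
  assumes "K \<in> knot n" and "K \<Rightarrow>\<^sub>p Q"
  shows "\<exists>K'. whs Q (App (Var 0) K') \<and> K' \<in> knot n"
proof -
  from assms(1) obtain a b where K: "K = apps (App (Abs a) (Abs b)) (knot_args n)"
    and ab: "a \<in> knot_body n" "b \<in> knot_body n"
    by (auto simp: knot_def)
  from par_beta_apps_inv [OF assms(2) [unfolded K]] list_all2_par_beta_knot_args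
  obtain h' where Q: "Q = apps h' (knot_args n)" and "App (Abs a) (Abs b) \<Rightarrow>\<^sub>p h'"
    by blast
  then obtain a' b' where a'b': "a' \<in> knot_body n" "b' \<in> knot_body n"
    and h': "h' = App (Abs a') (Abs b') \<or> h' = subst a' (Abs b') 0"
    using ab par_beta_knot_body by blast
  from h' Q have "whs Q (apps (subst a' (Abs b') 0) (knot_args n))"
    by (auto intro: whs_beta_apps)
  moreover note whs_knot_unfold [OF a'b']
  moreover have "apps (Abs b') (Abs b' # knot_args n) \<in> knot n"
    using a'b' by (auto simp: knot_def)
  ultimately show ?thesis
    by (blast intro: rtranclp_trans)
qed

lemma knot_index_unique: "K \<in> knot n \<Longrightarrow> K \<in> knot m \<Longrightarrow> n = m"
  by (auto simp: knot_def apps_Abs_eq_apps_Abs_iff) (metis length_knot_args)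

inductive knot_tower :: "nat \<Rightarrow> dB \<Rightarrow> bool" for n where
  knot: "K \<in> knot n \<Longrightarrow> knot_tower n K"
| unfold: "whs R (App (Var 0) R') \<Longrightarrow> knot_tower n R' \<Longrightarrow> knot_tower n R"

lemma knot_tower_par_beta: "knot_tower n R \<Longrightarrow> R \<Rightarrow>\<^sub>p R' \<Longrightarrow> knot_tower n R'"
proof (induct arbitrary: R' rule: knot_tower.induct)
  case (knot K)
  then obtain K' where "whs R' (App (Var 0) K')" "K' \<in> knot n"
    using par_beta_knot by blast
  then show ?case
    by (blast intro: knot_tower.intros)
next
  case (unfold R R1)
  from whs_Var_App_par_beta [OF unfold.hyps(1) unfold.prems] obtain R1' where
    "whs R' (App (Var 0) R1')" "R1 \<Rightarrow>\<^sub>p R1'"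
    by blast
  with unfold.hyps(3) show ?case
    by (blast intro: knot_tower.unfold)
qed

lemma knot_tower_rtranclp_beta: "beta\<^sup>*\<^sup>* R R' \<Longrightarrow> knot_tower n R \<Longrightarrow> knot_tower n R'"
  by (induct rule: rtranclp_induct) (auto intro: knot_tower_par_beta beta_imp_par_beta)

lemma knot_tower_knot: "knot_tower m K \<Longrightarrow> K \<in> knot n \<Longrightarrow> n = m"
proof (induct rule: knot_tower.induct)
  case (knot K)
  then show ?case using knot_index_unique by blast
next
  case (unfold R R1)
  from par_beta_knot [OF unfold.prems par_beta_refl]
  obtain K' where "whs R (App (Var 0) K')" "K' \<in> knot n"
    by blast
  with whs_Var_App_unique [OF unfold.hyps(1)] unfold.hyps(3) show ?case by blast
qed

lemma knot_tower_unique: "knot_tower n R \<Longrightarrow> knot_tower m R \<Longrightarrow> n = m"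
proof (induct arbitrary: m rule: knot_tower.induct)
  case (knot K)
  then show ?case by (simp add: knot_tower_knot)
next
  case (unfold R R1)
  from unfold.prems show ?case
  proof cases
    case knot
    then show ?thesis
      using knot_tower_knot [OF knot_tower.unfold [OF unfold.hyps(1,2)]] by simp
  next
    case (unfold R1')
    with whs_Var_App_unique [OF unfold.hyps(1)] unfold.hyps(3) show ?thesis by blast
  qed
qed

section \<open>The Scott sequence\<close>

lemma whs_combB_combY0:
  "whs (apps combB (combY0 # f # g # us))
       (apps (Abs a) (Abs a # us))"
  if "a = App (App (lift f 0) (lift g 0)) (App (Var 0) (Var 0))"
proof -
  have "whs (apps combY0 (App f g # us)) (apps (Abs a) (Abs a # us))"
    unfolding combY0_def by (rule whs_beta_apps) (simp add: that)
  with whs_combB show ?thesis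
    by (rule rtranclp_trans)
qed

lemma App_scottU_Var:
  "App (scottU n) (Var 0) = apps combB (combY0 # replicate n combS @ [combI, Var 0])"
proof -
  have "scott_pre n = apps (App combB combY0) (replicate n combS)"
  proof (induct n)
    case (Suc n)
    have "replicate (Suc n) combS = replicate n combS @ [combS]"
      by (simp add: replicate_append_same)
    with Suc show ?case
      by (simp only: scott_pre.simps apps_snoc)
  qed simp
  then show ?thesis
    by (simp add: scottU_def apps_append apps.simps(2) del: apps_App)
qed

lemma whs_scottU_knot: "\<exists>K. whs (App (scottU n) (Var 0)) K \<and> K \<in> knot n"
proof -
  obtain f g where U: "App (scottU n) (Var 0) = apps combB (combY0 # f # g # knot_args n)"
    and a: "App (App (lift f 0) (lift g 0)) (App (Var 0) (Var 0)) \<in> knot_body n"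
    by (cases n rule: knot_args.cases) (auto simp: App_scottU_Var)
  show ?thesis
    unfolding U using whs_combB_combY0 [OF refl] a by (auto simp: knot_def)
qed

lemma scottU_reduct_joins_knot_tower:
  assumes "beta\<^sup>*\<^sup>* (App (scottU n) (Var 0)) R"
  shows "\<exists>R'. beta\<^sup>*\<^sup>* R R' \<and> knot_tower n R'"
proof -
  obtain K where "whs (App (scottU n) (Var 0)) K" and "K \<in> knot n"
    using whs_scottU_knot by blast
  with assms obtain R' where "beta\<^sup>*\<^sup>* R R'" "beta\<^sup>*\<^sup>* K R'"
    by (metis confluentpD [OF confluentp_beta] whs_imp_rtranclp_beta)
  with \<open>K \<in> knot n\<close> show ?thesis
    by (blast intro: knot_tower_rtranclp_beta knot_tower.knot)
qed

theorem corollary4p17: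
  fixes n m :: nat
  assumes "n \<noteq> m"
  shows "\<not> beta_eq (scottU n) (scottU m)"
proof
  assume "beta_eq (scottU n) (scottU m)"
  then obtain c where "beta\<^sup>*\<^sup>* (scottU n) c" "beta\<^sup>*\<^sup>* (scottU m) c"
    by (auto simp: beta_eq_iff_common_reduct)
  then have "beta\<^sup>*\<^sup>* (App (scottU n) (Var 0)) (App c (Var 0))"
    and "beta\<^sup>*\<^sup>* (App (scottU m) (Var 0)) (App c (Var 0))"
    by (simp_all add: rtranclp_beta_App)
  then obtain R1 R2 where "beta\<^sup>*\<^sup>* (App c (Var 0)) R1" "knot_tower n R1"
    and "beta\<^sup>*\<^sup>* (App c (Var 0)) R2" "knot_tower m R2"
    by (meson scottU_reduct_joins_knot_tower)
  then obtain R where "knot_tower n R" "knot_tower m R"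
    by (meson confluentpD [OF confluentp_beta] knot_tower_rtranclp_beta)
  then have "n = m"
    by (rule knot_tower_unique)
  with assms show False ..
qed

end
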